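(* Let $G$ and $H$ be finitely generated groups whose growth functions $g_G(n)$ and $g_H(n)$ are polynomial and exponential, respectively. Then for any polynomial $t(n)$, $\mathfrak{L}(H)\not\subseteq \mathfrak{L}(G)^w_{t(n)}$.
   Context: For a group $G$ with identity $e$, a $G$-automaton is a tuple $(Q,\Sigma,G,\delta,q_0,Q_a)$ where $Q$ is a finite set of states, $\Sigma$ a finite input alphabet, $q_0\in Q$ the initial state, $Q_a\subseteq Q$ the accepting states, and $\delta$ assigns to each $(q,\sigma)\in Q\times(\Sigma\cup\{\varepsilon\})$ a finite set of pairs $(q',m)\in Q\times G$. The register holds an element of $G$, initially $e$; using a transition $(q',m)\in\delta(q,\sigma)$ (one step) the automaton reads $\sigma$ (or nothing), moves to $q'$ and replaces the register content $x$ by $xm$. A word is accepted if some computation reads it entirely and ends in an accepting state with register equal to $e$. $\mathfrak{L}(G)$ is the class of languages recognized by $G$-automata. A $G$-automaton recognizing $\mathtt{L}$ is weakly $t(n)$ time-bounded if every $x\in\mathtt{L}$ with $|x|=n$ has an accepting computation of at most $t(n)$ steps; $\mathfrak{L}(G)^w_{t(n)}$ is the class of languages recognized by such automata. The growth function $g_G(n)$ of $G$ with respect to a finite generating set $X$ is the number of elements of $G$ representable by words of length at most $n$ over $X\cup X^{-1}$. *)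

theory Defs
  imports "HOL-Algebra.Generated_Groups" "HOL-Computational_Algebra.Polynomial"
begin

definition fin_gen_set :: "('g,'b) monoid_scheme \<Rightarrow> 'g set \<Rightarrow> bool" where
  "fin_gen_set G X \<longleftrightarrow> finite X \<and> X \<subseteq> carrier G \<and> generate G X = carrier G"

definition eval_word :: "('g,'b) monoid_scheme \<Rightarrow> 'g list \<Rightarrow> 'g" where
  "eval_word G ws = foldr (\<lambda>a b. a \<otimes>\<^bsub>G\<^esub> b) ws \<one>\<^bsub>G\<^esub>"

definition growth :: "('g,'b) monoid_scheme \<Rightarrow> 'g set \<Rightarrow> nat \<Rightarrow> nat" where
  "growth G X n = card {x. \<exists>ws. length ws \<le> n \<and> set ws \<subseteq> X \<union> m_inv G ` X \<and> x = eval_word G ws}"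

definition polynomial_growth :: "(nat \<Rightarrow> nat) \<Rightarrow> bool" where
  "polynomial_growth g \<longleftrightarrow> (\<exists>C d. \<forall>n. real (g n) \<le> C * (real n + 1) ^ d)"

definition exponential_growth :: "(nat \<Rightarrow> nat) \<Rightarrow> bool" where
  "exponential_growth g \<longleftrightarrow> (\<exists>c a. c > 0 \<and> a > (1::real) \<and> (\<forall>n. c * a ^ n \<le> real (g n)))"

text \<open>States and input letters are taken to be natural numbers (any finite
  set embeds into nat). A transition function maps a state and either a letter (Some a)
  or the empty word (None) to a finite set of pairs (next state, group element).\<close>

definition G_automaton :: "('g,'b) monoid_scheme \<Rightarrow> nat set \<Rightarrow> nat set
    \<Rightarrow> (nat \<Rightarrow> nat option \<Rightarrow> (nat \<times> 'g) set) \<Rightarrow> nat \<Rightarrow> nat set \<Rightarrow> bool" where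
  "G_automaton G Q \<Sigma> \<delta> q0 Qa \<longleftrightarrow>
     finite Q \<and> finite \<Sigma> \<and> q0 \<in> Q \<and> Qa \<subseteq> Q \<and>
     (\<forall>q s. finite (\<delta> q s) \<and> \<delta> q s \<subseteq> Q \<times> carrier G) \<and>
     (\<forall>q s. \<delta> q s \<noteq> {} \<longrightarrow> q \<in> Q \<and> (case s of None \<Rightarrow> True | Some a \<Rightarrow> a \<in> \<Sigma>))"

text \<open>comp G \<delta> q x w n q' x': starting in state q with register x, the automaton can read
  the word w entirely in exactly n steps, ending in state q' with register x'.\<close>
inductive comp :: "('g,'b) monoid_scheme \<Rightarrow> (nat \<Rightarrow> nat option \<Rightarrow> (nat \<times> 'g) set)
    \<Rightarrow> nat \<Rightarrow> 'g \<Rightarrow> nat list \<Rightarrow> nat \<Rightarrow> nat \<Rightarrow> 'g \<Rightarrow> bool"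
  for G \<delta> where
  stop: "comp G \<delta> q x [] 0 q x"
| eps: "(q1, m) \<in> \<delta> q None \<Longrightarrow> comp G \<delta> q1 (x \<otimes>\<^bsub>G\<^esub> m) w n q' x'
          \<Longrightarrow> comp G \<delta> q x w (Suc n) q' x'"
| read: "(q1, m) \<in> \<delta> q (Some a) \<Longrightarrow> comp G \<delta> q1 (x \<otimes>\<^bsub>G\<^esub> m) w n q' x'
          \<Longrightarrow> comp G \<delta> q x (a # w) (Suc n) q' x'"

definition accepts_in :: "('g,'b) monoid_scheme \<Rightarrow> (nat \<Rightarrow> nat option \<Rightarrow> (nat \<times> 'g) set)
    \<Rightarrow> nat \<Rightarrow> nat set \<Rightarrow> nat list \<Rightarrow> nat \<Rightarrow> bool" where
  "accepts_in G \<delta> q0 Qa w n \<longleftrightarrow> (\<exists>q. q \<in> Qa \<and> comp G \<delta> q0 \<one>\<^bsub>G\<^esub> w n q \<one>\<^bsub>G\<^esub>)"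

definition aut_lang :: "('g,'b) monoid_scheme \<Rightarrow> (nat \<Rightarrow> nat option \<Rightarrow> (nat \<times> 'g) set)
    \<Rightarrow> nat \<Rightarrow> nat set \<Rightarrow> nat list set" where
  "aut_lang G \<delta> q0 Qa = {w. \<exists>n. accepts_in G \<delta> q0 Qa w n}"

definition LG :: "('g,'b) monoid_scheme \<Rightarrow> nat list set set" where
  "LG G = {L. \<exists>Q \<Sigma> \<delta> q0 Qa. G_automaton G Q \<Sigma> \<delta> q0 Qa \<and> L = aut_lang G \<delta> q0 Qa}"

definition LGw :: "('g,'b) monoid_scheme \<Rightarrow> (nat \<Rightarrow> real) \<Rightarrow> nat list set set" where
  "LGw G t = {L. \<exists>Q \<Sigma> \<delta> q0 Qa. G_automaton G Q \<Sigma> \<delta> q0 Qa \<and> L = aut_lang G \<delta> q0 Qa \<and>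
      (\<forall>w\<in>L. \<exists>n. real n \<le> t (length w) \<and> accepts_in G \<delta> q0 Qa w n)}"

end

theory Submission
  imports Defs "HOL-Real_Asymp.Real_Asymp"
begin

(* The word problem of H, written over a symmetric generating list together with formal inverses,
   is recognised by a one-state H-automaton. Suppose a G-automaton recognises it within polynomial
   time t. For h in the n-ball of H choose a word u_h of length at most n spelling h, and let v_h
   be the reversed word of formal inverses, which spells h^-1; then u_h v_h is accepted in at most
   t(2n) steps. The configuration (state, register) reached after reading u_h lies in
   Q \<times> B_G(K t(2n)), where K bounds the word length of the transition labels, and distinct h give
   distinct configurations, because otherwise some u_h v_h' with h \<noteq> h' would be accepted.
   Hence g_H(n) \<le> |Q| g_G(K t(2n)) is polynomial in n, contradicting the exponential growth of H. *)

lemma exponential_growth_not_polynomial_growth: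
  assumes "exponential_growth f"
  shows "\<not> polynomial_growth f"
proof
  assume "polynomial_growth f"
  then obtain C d where C: "\<And>n. real (f n) \<le> C * (real n + 1) ^ d"
    unfolding polynomial_growth_def by blast
  obtain c a where ca: "c > 0" "a > 1" "\<And>n. c * a ^ n \<le> real (f n)"
    using assms unfolding exponential_growth_def by blast
  have "((\<lambda>n. C / c * ((real n + 1) ^ d / a ^ n)) \<longlongrightarrow> 0) at_top"
    using ca(2) by (intro tendsto_mult_right_zero) real_asymp
  then have "eventually (\<lambda>n. C / c * ((real n + 1) ^ d / a ^ n) < 1) at_top"
    by (rule order_tendstoD) simp
  then obtain n where "C / c * ((real n + 1) ^ d / a ^ n) < 1"
    by (auto simp: eventually_at_top_linorder)
  moreover have "a ^ n > 0"
    using ca(2) by simp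
  ultimately have "C * (real n + 1) ^ d < c * a ^ n"
    using ca(1) by (simp add: field_simps)
  then show False
    using C[of n] ca(3)[of n] by linarith
qed

lemma polynomial_growth_le_compose:
  fixes f g h :: "nat \<Rightarrow> nat"
  assumes "polynomial_growth g"
    and h: "\<And>n. real (h n) \<le> A * (real n + 1) ^ e"
    and f: "\<And>n. f n \<le> B * g (h n)"
  shows "polynomial_growth f"
proof -
  obtain C d where C: "\<And>n. real (g n) \<le> C * (real n + 1) ^ d"
    using assms(1) unfolding polynomial_growth_def by blast
  have "C \<ge> 0"
    using C[of 0] by simp
  have "real (f n) \<le> real B * C * (A + 1) ^ d * (real n + 1) ^ (e * d)" for n
  proof -
    have "1 \<le> (real n + 1) ^ e"
      by simp
    then have "real (h n) + 1 \<le> (A + 1) * (real n + 1) ^ e"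
      using h[of n] unfolding distrib_right by linarith
    then have "(real (h n) + 1) ^ d \<le> ((A + 1) * (real n + 1) ^ e) ^ d"
      by (intro power_mono) simp_all
    also have "\<dots> = (A + 1) ^ d * (real n + 1) ^ (e * d)"
      by (simp add: power_mult_distrib power_mult)
    finally have hd: "(real (h n) + 1) ^ d \<le> (A + 1) ^ d * (real n + 1) ^ (e * d)" .
    have "real (f n) \<le> real B * real (g (h n))"
      using f[of n] by (simp flip: of_nat_mult)
    also have "\<dots> \<le> real B * (C * (real (h n) + 1) ^ d)"
      using C[of "h n"] by (intro mult_left_mono) simp_all
    also have "\<dots> \<le> real B * (C * ((A + 1) ^ d * (real n + 1) ^ (e * d)))"
      using hd \<open>C \<ge> 0\<close> by (intro mult_left_mono) simp_all
    finally show ?thesis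
      by (simp add: mult.assoc)
  qed
  then show ?thesis
    unfolding polynomial_growth_def by blast
qed

lemma poly_le_power_bound:
  fixes p :: "real poly"
  obtains A e where "A \<ge> 0" "\<And>x. x \<ge> 0 \<Longrightarrow> poly p x \<le> A * (x + 1) ^ e"
proof
  show "0 \<le> (\<Sum>i\<le>degree p. \<bar>coeff p i\<bar>)"
    by (simp add: sum_nonneg)
  fix x :: real
  assume x: "x \<ge> 0"
  have "poly p x = (\<Sum>i\<le>degree p. coeff p i * x ^ i)"
    by (simp add: poly_altdef)
  also have "\<dots> \<le> (\<Sum>i\<le>degree p. \<bar>coeff p i\<bar> * (x + 1) ^ degree p)"
  proof (rule sum_mono)
    fix i
    assume i: "i \<in> {..degree p}"
    have "x ^ i \<le> (x + 1) ^ i"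
      using x by (intro power_mono) auto
    also have "\<dots> \<le> (x + 1) ^ degree p"
      using x i by (intro power_increasing) auto
    finally have "x ^ i \<le> (x + 1) ^ degree p" .
    have "coeff p i * x ^ i \<le> \<bar>coeff p i\<bar> * x ^ i"
      using x by (intro mult_right_mono) auto
    also have "\<dots> \<le> \<bar>coeff p i\<bar> * (x + 1) ^ degree p"
      using \<open>x ^ i \<le> (x + 1) ^ degree p\<close> by (intro mult_left_mono) auto
    finally show "coeff p i * x ^ i \<le> \<bar>coeff p i\<bar> * (x + 1) ^ degree p" .
  qed
  also have "\<dots> = (\<Sum>i\<le>degree p. \<bar>coeff p i\<bar>) * (x + 1) ^ degree p"
    by (simp add: sum_distrib_right)
  finally show "poly p x \<le> (\<Sum>i\<le>degree p. \<bar>coeff p i\<bar>) * (x + 1) ^ degree p" .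
qed

definition word_ball :: "('g,'b) monoid_scheme \<Rightarrow> 'g set \<Rightarrow> nat \<Rightarrow> 'g set" where
  "word_ball G X N = {x. \<exists>ws. length ws \<le> N \<and> set ws \<subseteq> X \<union> m_inv G ` X \<and> x = eval_word G ws}"

lemma growth_eq_card_word_ball: "growth G X N = card (word_ball G X N)"
  by (simp add: growth_def word_ball_def)

lemma eval_word_Nil [simp]: "eval_word G [] = \<one>\<^bsub>G\<^esub>"
  by (simp add: eval_word_def)

lemma eval_word_Cons [simp]: "eval_word G (a # ws) = a \<otimes>\<^bsub>G\<^esub> eval_word G ws"
  by (simp add: eval_word_def)

lemma (in monoid) eval_word_closed: "set ws \<subseteq> carrier G \<Longrightarrow> eval_word G ws \<in> carrier G"
  by (induction ws) auto

lemma (in monoid) eval_word_append: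
  "set xs \<subseteq> carrier G \<Longrightarrow> set ys \<subseteq> carrier G \<Longrightarrow>
    eval_word G (xs @ ys) = eval_word G xs \<otimes> eval_word G ys"
  by (induction xs) (auto simp: eval_word_closed m_assoc)

lemma (in group) inv_eval_word:
  "set ws \<subseteq> carrier G \<Longrightarrow> inv (eval_word G ws) = eval_word G (rev (map (m_inv G) ws))"
proof (induction ws)
  case (Cons a ws)
  have "set (rev (map (m_inv G) ws)) \<subseteq> carrier G" "set [inv a] \<subseteq> carrier G"
    using Cons.prems by auto
  then show ?case
    using Cons by (simp add: eval_word_append eval_word_closed inv_mult_group)
qed simp

lemma finite_word_ball: "finite X \<Longrightarrow> finite (word_ball G X N)"
proof -
  assume "finite X"
  then have "finite {ws. set ws \<subseteq> X \<union> m_inv G ` X \<and> length ws \<le> N}"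
    by (intro finite_lists_length_le) auto
  moreover have "word_ball G X N = eval_word G ` {ws. set ws \<subseteq> X \<union> m_inv G ` X \<and> length ws \<le> N}"
    unfolding word_ball_def by auto
  ultimately show ?thesis by simp
qed

lemma word_ball_mono: "N \<le> N' \<Longrightarrow> word_ball G X N \<subseteq> word_ball G X N'"
  unfolding word_ball_def by (blast intro: le_trans)

lemma one_mem_word_ball: "\<one>\<^bsub>G\<^esub> \<in> word_ball G X N"
  unfolding word_ball_def by (intro CollectI exI[of _ "[]"]) simp

lemma (in group) word_ball_subset_carrier:
  "X \<subseteq> carrier G \<Longrightarrow> word_ball G X N \<subseteq> carrier G"
  unfolding word_ball_def by (auto intro!: eval_word_closed)

lemma (in group) word_ball_mult:
  assumes "X \<subseteq> carrier G" "x \<in> word_ball G X N" "y \<in> word_ball G X N'"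
  shows "x \<otimes> y \<in> word_ball G X (N + N')"
proof -
  obtain xs where xs: "length xs \<le> N" "set xs \<subseteq> X \<union> m_inv G ` X" "x = eval_word G xs"
    using assms(2) unfolding word_ball_def by blast
  obtain ys where ys: "length ys \<le> N'" "set ys \<subseteq> X \<union> m_inv G ` X" "y = eval_word G ys"
    using assms(3) unfolding word_ball_def by blast
  have "set xs \<subseteq> carrier G" "set ys \<subseteq> carrier G"
    using xs(2) ys(2) assms(1) by auto
  then have "x \<otimes> y = eval_word G (xs @ ys)"
    using xs(3) ys(3) by (simp add: eval_word_append)
  then show ?thesis
    unfolding word_ball_def using xs ys by (intro CollectI exI[of _ "xs @ ys"]) auto
qed

lemma (in group) generate_in_word_ball:
  assumes "X \<subseteq> carrier G" "x \<in> generate G X"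
  shows "\<exists>N. x \<in> word_ball G X N"
  using assms(2)
proof (induction rule: generate.induct)
  case one
  then show ?case using one_mem_word_ball by blast
next
  case (incl h)
  then have "h = eval_word G [h]" using assms(1) by auto
  then show ?case
    unfolding word_ball_def using incl by (intro exI[of _ 1] CollectI exI[of _ "[h]"]) auto
next
  case (inv h)
  then have "inv h = eval_word G [inv h]" using assms(1) by auto
  then show ?case
    unfolding word_ball_def using inv by (intro exI[of _ 1] CollectI exI[of _ "[inv h]"]) auto
next
  case (eng h h')
  then show ?case using word_ball_mult[OF assms(1)] by blast
qed

lemma (in group) finite_subset_word_ball:
  assumes "X \<subseteq> carrier G" "generate G X = carrier G" "finite F" "F \<subseteq> carrier G"
  shows "\<exists>N. F \<subseteq> word_ball G X N"
  using assms(3,4)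
proof (induction rule: finite_induct)
  case empty
  then show ?case by blast
next
  case (insert x F)
  then obtain N N' where "F \<subseteq> word_ball G X N" "x \<in> word_ball G X N'"
    using generate_in_word_ball[OF assms(1)] assms(2) by blast
  then have "insert x F \<subseteq> word_ball G X (max N N')"
    using word_ball_mono[of N "max N N'" G X] word_ball_mono[of N' "max N N'" G X] by auto
  then show ?case by blast
qed

lemma set_map_nth_subset: "set zs \<subseteq> A \<Longrightarrow> set l \<subseteq> {..<length zs} \<Longrightarrow> set (map ((!) zs) l) \<subseteq> A"
  by (auto intro: nth_mem)

lemma map_nth_append_left: "set l \<subseteq> {..<length xs} \<Longrightarrow> map ((!) (xs @ ys)) l = map ((!) xs) l"
  by (auto simp: nth_append)

lemma word_ball_index_words:
  assumes "set ys = X \<union> m_inv G ` X"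
  obtains u where "\<And>x. x \<in> word_ball G X N \<Longrightarrow>
    set (u x) \<subseteq> {..<length ys} \<and> length (u x) \<le> N \<and> x = eval_word G (map ((!) ys) (u x))"
proof -
  define idx where "idx = inv_into {..<length ys} ((!) ys)"
  have ys_image: "set ys = (!) ys ` {..<length ys}"
    by (auto simp: in_set_conv_nth)
  have "\<forall>x \<in> word_ball G X N.
      \<exists>l. set l \<subseteq> {..<length ys} \<and> length l \<le> N \<and> x = eval_word G (map ((!) ys) l)"
  proof
    fix x
    assume x: "x \<in> word_ball G X N"
    obtain ws where ws: "length ws \<le> N" "set ws \<subseteq> set ys" "x = eval_word G ws"
      using x assms unfolding word_ball_def by blast
    have "map ((!) ys) (map idx ws) = ws"
      unfolding map_map
      by (rule map_idI) (use ws(2) ys_image in \<open>auto simp: idx_def f_inv_into_f\<close>)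
    moreover have "set (map idx ws) \<subseteq> {..<length ys}"
      using ws(2) ys_image inv_into_into[of _ "(!) ys" "{..<length ys}"] by (auto simp: idx_def)
    ultimately show "\<exists>l. set l \<subseteq> {..<length ys} \<and> length l \<le> N \<and>
        x = eval_word G (map ((!) ys) l)"
      using ws by (intro exI[of _ "map idx ws"]) simp
  qed
  then have "\<exists>u. \<forall>x \<in> word_ball G X N.
      set (u x) \<subseteq> {..<length ys} \<and> length (u x) \<le> N \<and> x = eval_word G (map ((!) ys) (u x))"
    by (rule bchoice)
  then show thesis
    using that by blast
qed

lemma comp_append:
  "comp G \<delta> q x u n q' x' \<Longrightarrow> comp G \<delta> q' x' v n' q'' x'' \<Longrightarrow>
    comp G \<delta> q x (u @ v) (n + n') q'' x''"
  by (induction rule: comp.induct) (auto intro: comp.intros)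

lemma comp_append_split:
  "comp G \<delta> q x (u @ v) n q'' x'' \<Longrightarrow>
    \<exists>n1 n2 q' x'. n = n1 + n2 \<and> comp G \<delta> q x u n1 q' x' \<and> comp G \<delta> q' x' v n2 q'' x''"
proof (induction q x "u @ v" n q'' x'' arbitrary: u rule: comp.induct)
  case (stop q x)
  then show ?case by (auto intro: comp.stop)
next
  case (eps q1 m q x n q'' x'')
  then show ?case by (metis add_Suc comp.eps)
next
  case (read q1 m q a x w n q'' x'')
  show ?case
  proof (cases u)
    case Nil
    then show ?thesis using read.hyps(1,2) read.hyps(4) by (metis add_0 append_Nil comp.read comp.stop)
  next
    case (Cons b u')
    then show ?thesis using read by (metis add_Suc append_Cons comp.read list.inject)
  qed
qed

lemma comp_target_in_states:
  assumes "G_automaton G Q \<Sigma> \<delta> q0 Qa"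
  shows "comp G \<delta> q x w n q' x' \<Longrightarrow> q \<in> Q \<Longrightarrow> q' \<in> Q"
  by (induction rule: comp.induct) (use assms in \<open>auto simp: G_automaton_def\<close>)

lemma (in group) comp_register_in_word_ball:
  assumes X: "X \<subseteq> carrier G"
    and labels: "\<And>q s. snd ` \<delta> q s \<subseteq> word_ball G X K"
    and "comp G \<delta> q x w n q' x'" "x \<in> carrier G"
  shows "\<exists>z \<in> word_ball G X (K * n). x' = x \<otimes> z"
proof -
  have step: "\<exists>z' \<in> word_ball G X (K * Suc n). x' = x \<otimes> z'"
    if "x \<in> carrier G" "m \<in> word_ball G X K" "z \<in> word_ball G X (K * n)" "x' = x \<otimes> m \<otimes> z"
    for x m z n x'
  proof -
    have "m \<otimes> z \<in> word_ball G X (K * Suc n)"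
      using word_ball_mult[OF X that(2,3)] by simp
    moreover have "m \<in> carrier G" "z \<in> carrier G"
      using that(2,3) word_ball_subset_carrier[OF X] by auto
    then have "x' = x \<otimes> (m \<otimes> z)"
      using that(1,4) by (simp add: m_assoc)
    ultimately show ?thesis by blast
  qed
  show ?thesis using assms(3,4)
  proof (induction rule: comp.induct)
    case (stop q x)
    then show ?case using one_mem_word_ball by force
  next
    case (eps q1 m q x w n q' x')
    moreover have "m \<in> word_ball G X K" using labels eps.hyps(1) by force
    ultimately show ?case using step word_ball_subset_carrier[OF X] by blast
  next
    case (read q1 m q a x w n q' x')
    moreover have "m \<in> word_ball G X K" using labels read.hyps(1) by force
    ultimately show ?case using step word_ball_subset_carrier[OF X] by blast
  qed
qed

lemma (in group) G_automaton_labels_in_word_ball: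
  assumes "fin_gen_set G X" "G_automaton G Q \<Sigma> \<delta> q0 Qa"
  obtains K where "\<And>q s. snd ` \<delta> q s \<subseteq> word_ball G X K"
proof -
  define labels where "labels = (\<Union>q\<in>Q. \<Union>s\<in>insert None (Some ` \<Sigma>). snd ` \<delta> q s)"
  have trans: "finite (\<delta> q s)" "\<delta> q s \<subseteq> Q \<times> carrier G" for q s
    using assms(2) unfolding G_automaton_def by blast+
  have "finite labels" "labels \<subseteq> carrier G"
    using assms(2) trans unfolding labels_def G_automaton_def by force+
  then obtain K where K: "labels \<subseteq> word_ball G X K"
    using finite_subset_word_ball assms(1) unfolding fin_gen_set_def by blast
  have "snd ` \<delta> q s \<subseteq> labels" for q s
  proof (cases "\<delta> q s = {}")
    case False
    then have "q \<in> Q \<and> (case s of None \<Rightarrow> True | Some a \<Rightarrow> a \<in> \<Sigma>)"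
      using assms(2) unfolding G_automaton_def by blast
    then show ?thesis unfolding labels_def by (cases s) auto
  qed simp
  then show thesis using that K by blast
qed

lemma (in group) card_fooling_set_le:
  fixes u v :: "'s \<Rightarrow> nat list"
  assumes X: "finite X" "X \<subseteq> carrier G"
    and aut: "G_automaton G Q \<Sigma> \<delta> q0 Qa"
    and labels: "\<And>q s. snd ` \<delta> q s \<subseteq> word_ball G X K"
    and accepted: "\<And>s. s \<in> S \<Longrightarrow> \<exists>n \<le> T. accepts_in G \<delta> q0 Qa (u s @ v s) n"
    and fooling: "\<And>s s'. s \<in> S \<Longrightarrow> s' \<in> S \<Longrightarrow> u s @ v s' \<in> aut_lang G \<delta> q0 Qa \<Longrightarrow> s = s'"
  shows "card S \<le> card Q * growth G X (K * T)"
proof -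
  define crossing where "crossing s c \<longleftrightarrow> c \<in> Q \<times> word_ball G X (K * T) \<and>
      (\<exists>n. comp G \<delta> q0 \<one> (u s) n (fst c) (snd c)) \<and>
      (\<exists>n qf. qf \<in> Qa \<and> comp G \<delta> (fst c) (snd c) (v s) n qf \<one>)" for s c
  have "\<exists>c. crossing s c" if s: "s \<in> S" for s
  proof -
    obtain n qf where n: "n \<le> T" and qf: "qf \<in> Qa" "comp G \<delta> q0 \<one> (u s @ v s) n qf \<one>"
      using accepted[OF s] unfolding accepts_in_def by blast
    then obtain n1 n2 q x where n12: "n = n1 + n2"
      and run_u: "comp G \<delta> q0 \<one> (u s) n1 q x" and run_v: "comp G \<delta> q x (v s) n2 qf \<one>"
      using comp_append_split[OF qf(2)] by blast
    have "q \<in> Q"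
      using comp_target_in_states[OF aut run_u] aut by (simp add: G_automaton_def)
    obtain z where z: "z \<in> word_ball G X (K * n1)" "x = \<one> \<otimes> z"
      using comp_register_in_word_ball[OF X(2) labels run_u] by blast
    then have "x = z"
      using word_ball_subset_carrier[OF X(2), of "K * n1"] by auto
    moreover have "word_ball G X (K * n1) \<subseteq> word_ball G X (K * T)"
      using n n12 by (intro word_ball_mono) simp
    ultimately have "x \<in> word_ball G X (K * T)"
      using z(1) by blast
    then show ?thesis
      unfolding crossing_def using \<open>q \<in> Q\<close> run_u run_v qf(1) by (intro exI[of _ "(q, x)"]) auto
  qed
  then obtain c where c: "\<And>s. s \<in> S \<Longrightarrow> crossing s (c s)" by metis
  have "inj_on c S"
  proof (rule inj_onI)
    fix s s' assume s: "s \<in> S" "s' \<in> S" "c s = c s'"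
    then obtain n n' qf where "comp G \<delta> q0 \<one> (u s) n (fst (c s)) (snd (c s))"
      and "qf \<in> Qa" "comp G \<delta> (fst (c s)) (snd (c s)) (v s') n' qf \<one>"
      using c[OF s(1)] c[OF s(2)] unfolding crossing_def by auto
    then have "u s @ v s' \<in> aut_lang G \<delta> q0 Qa"
      unfolding aut_lang_def accepts_in_def by (blast intro: comp_append)
    then show "s = s'" using fooling s(1,2) by blast
  qed
  moreover have "c ` S \<subseteq> Q \<times> word_ball G X (K * T)"
    using c unfolding crossing_def by blast
  moreover have "finite (Q \<times> word_ball G X (K * T))"
    using aut X(1) by (simp add: G_automaton_def finite_word_ball)
  ultimately have "card S \<le> card (Q \<times> word_ball G X (K * T))"
    by (rule card_inj_on_le)
  then show ?thesis by (simp add: card_cartesian_product growth_eq_card_word_ball)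
qed

definition word_problem_trans :: "'g list \<Rightarrow> nat \<Rightarrow> nat option \<Rightarrow> (nat \<times> 'g) set" where
  "word_problem_trans zs q s =
     (case s of Some i \<Rightarrow> if q = 0 \<and> i < length zs then {(0, zs ! i)} else {} | None \<Rightarrow> {})"

definition word_problem_lang :: "('g,'b) monoid_scheme \<Rightarrow> 'g list \<Rightarrow> nat list set" where
  "word_problem_lang G zs = {w. set w \<subseteq> {..<length zs} \<and> eval_word G (map ((!) zs) w) = \<one>\<^bsub>G\<^esub>}"

lemma word_problem_G_automaton:
  "set zs \<subseteq> carrier G \<Longrightarrow> G_automaton G {0} {..<length zs} (word_problem_trans zs) 0 {0}"
  unfolding G_automaton_def word_problem_trans_def by (auto split: option.splits)

lemma (in monoid) eval_word_nth_closed: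
  "set zs \<subseteq> carrier G \<Longrightarrow> set w \<subseteq> {..<length zs} \<Longrightarrow> eval_word G (map ((!) zs) w) \<in> carrier G"
  by (intro eval_word_closed set_map_nth_subset)

lemma (in monoid) comp_word_problem_trans_iff:
  assumes "set zs \<subseteq> carrier G" "x \<in> carrier G"
  shows "comp G (word_problem_trans zs) 0 x w n q x' \<longleftrightarrow>
    set w \<subseteq> {..<length zs} \<and> n = length w \<and> q = 0 \<and> x' = x \<otimes> eval_word G (map ((!) zs) w)"
  using assms(2)
proof (induction w arbitrary: x n)
  case Nil
  show ?case
  proof
    assume "comp G (word_problem_trans zs) 0 x [] n q x'"
    then show "set [] \<subseteq> {..<length zs} \<and> n = length [] \<and> q = 0 \<and>
        x' = x \<otimes> eval_word G (map ((!) zs) [])"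
      using Nil by cases (auto simp: word_problem_trans_def)
  qed (use Nil in \<open>auto intro: comp.stop\<close>)
next
  case (Cons a w)
  have zs_carrier: "zs ! i \<in> carrier G" if "i < length zs" for i
    using assms(1) that by auto
  show ?case
  proof
    assume "comp G (word_problem_trans zs) 0 x (a # w) n q x'"
    then show "set (a # w) \<subseteq> {..<length zs} \<and> n = length (a # w) \<and> q = 0 \<and>
        x' = x \<otimes> eval_word G (map ((!) zs) (a # w))"
    proof cases
      case (read q1 m n')
      then have "a < length zs" "q1 = 0" "m = zs ! a"
        by (auto simp: word_problem_trans_def split: if_splits)
      then show ?thesis
        using read Cons zs_carrier eval_word_nth_closed[OF assms(1)] by (auto simp: m_assoc)
    qed (simp add: word_problem_trans_def)
  next
    assume rhs: "set (a # w) \<subseteq> {..<length zs} \<and> n = length (a # w) \<and> q = 0 \<and>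
        x' = x \<otimes> eval_word G (map ((!) zs) (a # w))"
    then have a: "a < length zs" by simp
    then have "comp G (word_problem_trans zs) 0 (x \<otimes> zs ! a) w (length w) 0 x'"
      using rhs Cons zs_carrier eval_word_nth_closed[OF assms(1)] by (auto simp: m_assoc)
    then show "comp G (word_problem_trans zs) 0 x (a # w) n q x'"
      using rhs a by (auto intro: comp.read simp: word_problem_trans_def)
  qed
qed

lemma (in monoid) aut_lang_word_problem_trans:
  "set zs \<subseteq> carrier G \<Longrightarrow> aut_lang G (word_problem_trans zs) 0 {0} = word_problem_lang G zs"
  unfolding aut_lang_def accepts_in_def word_problem_lang_def
  by (auto simp: comp_word_problem_trans_iff eval_word_nth_closed)

lemma (in monoid) word_problem_lang_in_LG:
  assumes "set zs \<subseteq> carrier G"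
  shows "word_problem_lang G zs \<in> LG G"
  unfolding LG_def
  using word_problem_G_automaton[OF assms] aut_lang_word_problem_trans[OF assms, symmetric] by blast

lemma (in group) eval_word_inverse_indices:
  assumes "set ys \<subseteq> carrier G" "set l \<subseteq> {..<length ys}"
  shows "eval_word G (map ((!) (ys @ map (m_inv G) ys)) (rev (map ((+) (length ys)) l))) =
    inv (eval_word G (map ((!) ys) l))"
proof -
  have "map ((!) (ys @ map (m_inv G) ys)) (rev (map ((+) (length ys)) l)) =
      rev (map (m_inv G) (map ((!) ys) l))"
    using assms(2) by (auto simp: nth_append rev_map)
  then show ?thesis
    using set_map_nth_subset[OF assms] by (simp add: inv_eval_word)
qed

lemma (in group) word_problem_fooling_words:
  assumes "Y \<subseteq> carrier G" "set ys = Y \<union> m_inv G ` Y"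
  obtains u v where
    "\<And>h. h \<in> word_ball G Y n \<Longrightarrow> length (u h @ v h) \<le> 2 * n"
    "\<And>h h'. h \<in> word_ball G Y n \<Longrightarrow> h' \<in> word_ball G Y n \<Longrightarrow>
      u h @ v h' \<in> word_problem_lang G (ys @ map (m_inv G) ys) \<longleftrightarrow> h = h'"
proof -
  let ?zs = "ys @ map (m_inv G) ys"
  obtain u where u: "\<And>h. h \<in> word_ball G Y n \<Longrightarrow>
      set (u h) \<subseteq> {..<length ys} \<and> length (u h) \<le> n \<and> h = eval_word G (map ((!) ys) (u h))"
    using word_ball_index_words[OF assms(2)] by blast
  define v where "v h = rev (map ((+) (length ys)) (u h))" for h
  have ys_carrier: "set ys \<subseteq> carrier G" and zs_carrier: "set ?zs \<subseteq> carrier G"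
    using assms by auto
  have indices: "set (u h) \<subseteq> {..<length ?zs}" "set (v h) \<subseteq> {..<length ?zs}"
    if "h \<in> word_ball G Y n" for h
    using u[OF that] by (auto simp: v_def)
  have eval_uv: "eval_word G (map ((!) ?zs) (u h @ v h')) = h \<otimes> inv h'"
    if h: "h \<in> word_ball G Y n" "h' \<in> word_ball G Y n" for h h'
  proof -
    have "eval_word G (map ((!) ?zs) (u h @ v h')) =
        eval_word G (map ((!) ?zs) (u h)) \<otimes> eval_word G (map ((!) ?zs) (v h'))"
      using set_map_nth_subset[OF zs_carrier indices(1)[OF h(1)]]
        set_map_nth_subset[OF zs_carrier indices(2)[OF h(2)]]
      by (simp only: map_append eval_word_append)
    moreover have "eval_word G (map ((!) ?zs) (u h)) = h"
      using u[OF h(1)] by (simp add: map_nth_append_left)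
    moreover have "eval_word G (map ((!) ?zs) (v h')) = inv h'"
      using eval_word_inverse_indices[OF ys_carrier] u[OF h(2)] by (simp add: v_def)
    ultimately show ?thesis
      by simp
  qed
  show thesis
  proof (rule that[of u v])
    show "length (u h @ v h) \<le> 2 * n" if "h \<in> word_ball G Y n" for h
      using u[OF that] by (simp add: v_def)
    show "u h @ v h' \<in> word_problem_lang G ?zs \<longleftrightarrow> h = h'"
      if h: "h \<in> word_ball G Y n" "h' \<in> word_ball G Y n" for h h'
    proof -
      have "h \<in> carrier G" "h' \<in> carrier G"
        using h word_ball_subset_carrier[OF assms(1)] by auto
      then show ?thesis
        using eval_uv[OF h] indices(1)[OF h(1)] indices(2)[OF h(2)]
        by (auto simp: word_problem_lang_def inv_solve_right')
    qed
  qed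
qed

lemma word_problem_time_bound_growth_le:
  assumes "group G" "group H" "fin_gen_set G X" "Y \<subseteq> carrier H" "set ys = Y \<union> m_inv H ` Y"
    and "A \<ge> 0"
    and aut: "G_automaton G Q \<Sigma> \<delta> q0 Qa"
    and lang: "aut_lang G \<delta> q0 Qa = word_problem_lang H (ys @ map (m_inv H) ys)"
    and fast: "\<forall>w \<in> aut_lang G \<delta> q0 Qa.
      \<exists>m. real m \<le> A * (real (length w) + 1) ^ e \<and> accepts_in G \<delta> q0 Qa w m"
  obtains K where
    "\<And>n. growth H Y n \<le> card Q * growth G X (K * nat \<lfloor>A * (2 * real n + 1) ^ e\<rfloor>)"
proof -
  interpret G: group G by fact
  interpret H: group H by fact
  have X: "finite X" "X \<subseteq> carrier G"
    using assms(3) unfolding fin_gen_set_def by auto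
  obtain K where labels: "\<And>q s. snd ` \<delta> q s \<subseteq> word_ball G X K"
    using G.G_automaton_labels_in_word_ball[OF assms(3) aut] by blast
  have "growth H Y n \<le> card Q * growth G X (K * nat \<lfloor>A * (2 * real n + 1) ^ e\<rfloor>)" for n
  proof -
    obtain u v where
      length_uv: "\<And>h. h \<in> word_ball H Y n \<Longrightarrow> length (u h @ v h) \<le> 2 * n" and
      lang_uv: "\<And>h h'. h \<in> word_ball H Y n \<Longrightarrow> h' \<in> word_ball H Y n \<Longrightarrow>
        u h @ v h' \<in> aut_lang G \<delta> q0 Qa \<longleftrightarrow> h = h'"
      using H.word_problem_fooling_words[OF assms(4,5)] unfolding lang by blast
    show ?thesis
      unfolding growth_eq_card_word_ball[of H]
    proof (rule G.card_fooling_set_le[where u = u and v = v, OF X aut labels])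
      fix h
      assume h: "h \<in> word_ball H Y n"
      then obtain m where m: "real m \<le> A * (real (length (u h @ v h)) + 1) ^ e"
        "accepts_in G \<delta> q0 Qa (u h @ v h) m"
        using fast lang_uv by blast
      have "A * (real (length (u h @ v h)) + 1) ^ e \<le> A * (2 * real n + 1) ^ e"
        using length_uv[OF h] \<open>A \<ge> 0\<close> by (intro mult_left_mono power_mono) auto
      then have "m \<le> nat \<lfloor>A * (2 * real n + 1) ^ e\<rfloor>"
        using m(1) by (intro le_nat_floor) linarith
      then show "\<exists>m \<le> nat \<lfloor>A * (2 * real n + 1) ^ e\<rfloor>. accepts_in G \<delta> q0 Qa (u h @ v h) m"
        using m(2) by blast
    qed (use lang_uv in blast)
  qed
  then show thesis
    using that by blast
qed

lemma polynomial_growth_if_word_problem_in_LGw: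
  fixes p :: "real poly"
  assumes "group G" "group H" "fin_gen_set G X" "polynomial_growth (growth G X)"
    and "Y \<subseteq> carrier H" "set ys = Y \<union> m_inv H ` Y"
    and "word_problem_lang H (ys @ map (m_inv H) ys) \<in> LGw G (\<lambda>n. poly p (real n))"
  shows "polynomial_growth (growth H Y)"
proof -
  obtain Q \<Sigma> \<delta> q0 Qa where aut: "G_automaton G Q \<Sigma> \<delta> q0 Qa"
    and lang: "aut_lang G \<delta> q0 Qa = word_problem_lang H (ys @ map (m_inv H) ys)"
    and fast: "\<forall>w \<in> aut_lang G \<delta> q0 Qa.
      \<exists>m. real m \<le> poly p (real (length w)) \<and> accepts_in G \<delta> q0 Qa w m"
    using assms(7) unfolding LGw_def by auto
  obtain A e where A: "A \<ge> 0" "\<And>x. x \<ge> 0 \<Longrightarrow> poly p x \<le> A * (x + 1) ^ e"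
    using poly_le_power_bound by blast
  have "\<forall>w \<in> aut_lang G \<delta> q0 Qa.
      \<exists>m. real m \<le> A * (real (length w) + 1) ^ e \<and> accepts_in G \<delta> q0 Qa w m"
    using fast A(2) of_nat_0_le_iff order_trans by blast
  then obtain K where K:
    "\<And>n. growth H Y n \<le> card Q * growth G X (K * nat \<lfloor>A * (2 * real n + 1) ^ e\<rfloor>)"
    using word_problem_time_bound_growth_le[OF assms(1,2,3,5,6) A(1) aut lang] by blast
  show ?thesis
  proof (rule polynomial_growth_le_compose[OF assms(4) _ K])
    fix n
    have "real (nat \<lfloor>A * (2 * real n + 1) ^ e\<rfloor>) \<le> A * (2 * real n + 1) ^ e"
      using A(1) by (intro of_nat_floor) simp
    also have "\<dots> \<le> A * (2 * (real n + 1)) ^ e"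
      using A(1) by (intro mult_left_mono power_mono) auto
    also have "\<dots> = A * 2 ^ e * (real n + 1) ^ e"
      by (simp only: power_mult_distrib mult.assoc)
    finally have "real K * real (nat \<lfloor>A * (2 * real n + 1) ^ e\<rfloor>) \<le>
        real K * (A * 2 ^ e * (real n + 1) ^ e)"
      by (rule mult_left_mono) simp
    then show "real (K * nat \<lfloor>A * (2 * real n + 1) ^ e\<rfloor>) \<le>
        real K * A * 2 ^ e * (real n + 1) ^ e"
      by (simp add: mult.assoc)
  qed
qed

theorem theorem4p4:
  fixes G :: "('g,'c) monoid_scheme" and H :: "('h,'d) monoid_scheme" and p :: "real poly"
  assumes "group G" and "group H"
    and "\<exists>X. fin_gen_set G X \<and> polynomial_growth (growth G X)"
    and "\<exists>Y. fin_gen_set H Y \<and> exponential_growth (growth H Y)"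
  shows "\<not> (LG H \<subseteq> LGw G (\<lambda>n. poly p (real n)))"
proof
  assume sub: "LG H \<subseteq> LGw G (\<lambda>n. poly p (real n))"
  obtain X where X: "fin_gen_set G X" "polynomial_growth (growth G X)"
    using assms(3) by blast
  obtain Y where Y: "finite Y" "Y \<subseteq> carrier H" and exp: "exponential_growth (growth H Y)"
    using assms(4) unfolding fin_gen_set_def by blast
  obtain ys where ys: "set ys = Y \<union> m_inv H ` Y"
    using finite_list[of "Y \<union> m_inv H ` Y"] Y(1) by blast
  have "set (ys @ map (m_inv H) ys) \<subseteq> carrier H"
    using ys Y(2) group.inv_closed[OF assms(2)] by auto
  then have "word_problem_lang H (ys @ map (m_inv H) ys) \<in> LGw G (\<lambda>n. poly p (real n))"
    using monoid.word_problem_lang_in_LG[OF group.is_monoid[OF assms(2)]] sub by blast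
  then have "polynomial_growth (growth H Y)"
    by (rule polynomial_growth_if_word_problem_in_LGw[OF assms(1,2) X Y(2) ys])
  then show False
    using exponential_growth_not_polynomial_growth[OF exp] by blast
qed

end
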